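(* Under the setting below, let $\Psi$ be the weak solution of the closed-loop system. There exist a sequence of times $t_n\nearrow\infty$ and $\Psi_\infty\in L^2(\mathbb{R}^N,\mathbb{C})$ with $\|\Psi_\infty\|_{L^2}\leq1$ such that $\Psi(t_n)\rightharpoonup\Psi_\infty$ weakly in $L^2(\mathbb{R}^N,\mathbb{C})$ and $\mathbb{P}_{\mathrm{disc}}\Psi(t_n)\to\mathbb{P}_{\mathrm{disc}}\Psi_\infty$ strongly in $L^2(\mathbb{R}^N,\mathbb{C})$.
   Context: Setting: $N\geq2$; $V$ satisfies decay assumption (A) (zero is neither an eigenvalue nor a resonance of $H_0=-\Delta+V$, and: ($N=2$) $|V(x)|\leq C(1+|x|)^{-3-\varepsilon}$; ($N=3$) $V\in L^{3/2-\varepsilon}\cap L^{3/2+\varepsilon}$; ($N\geq4$) $\widehat V\in L^1$ and $(1+|x|^2)^{\gamma/2}V$ bounded on $H^\nu$ for some $\nu>0,\gamma>N+4$); $\mu$ real-valued, $\mu\in\bigcup_{2\leq p<2N}L^p\cap L^\infty$; $\phi_0,\dots,\phi_M$ an orthonormal basis of eigenfunctions of the discrete subspace of $H_0$, eigenvalues $\lambda_j$; $\mathbb{P}_{\mathrm{disc}}\psi=\sum_{j=0}^M\langle\psi,\phi_j\rangle\phi_j$ with $\langle\xi,\zeta\rangle=\int\xi\bar\zeta$; $\Psi_0=\sum\alpha_j\phi_j$, $\|\Psi_0\|_{L^2}=1$, $\alpha_0\neq0$; the $\lambda_j$ pairwise different with non-degenerate differences $\lambda_{j_1}-\lambda_{k_1}\neq\lambda_{j_2}-\lambda_{k_2}$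 for $(j_1,k_1)\neq(j_2,k_2)$; $\langle\mu\phi_j,\phi_k\rangle\neq0$ for $j\neq k$. For $\epsilon,c>0$, $u_\epsilon(\Psi)=c[(1-\epsilon)\sum_{j}\Im(\langle\mu\Psi,\phi_j\rangle\langle\phi_j,\Psi\rangle)+\epsilon\Im(\langle\mu\Psi,\phi_0\rangle\langle\phi_0,\Psi\rangle)]$. Closed-loop system: $i\partial_t\Psi=-\Delta\Psi+(V-u_\epsilon(\Psi(t))\mu)\Psi$, $\Psi(0)=\Psi_0$; its weak solution is $\Psi\in C^0(\mathbb{R}^+,L^2)$ with unit norm satisfying the Duhamel formula $\Psi(t)=e^{-iH_0t}\Psi_0+i\int_0^te^{-iH_0(t-s)}u_\epsilon(\Psi(s))\mu\Psi(s)ds$. *)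

theory Defs
  imports "HOL-Analysis.Analysis"
begin

text \<open>Functions on R^N are modelled as maps real^'n => complex; the dimension is N = CARD('n).
  Elements of L^2 are represented by square-integrable functions; equality in L^2 means
  that the L^2 norm of the difference vanishes.\<close>

definition L2 :: "(real^'n::finite \<Rightarrow> complex) \<Rightarrow> bool" where
  "L2 f \<longleftrightarrow> f \<in> borel_measurable lborel \<and> integrable lborel (\<lambda>x. (cmod (f x))\<^sup>2)"

definition l2_inner :: "(real^'n \<Rightarrow> complex) \<Rightarrow> (real^'n \<Rightarrow> complex) \<Rightarrow> complex" where
  "l2_inner f g = (\<integral>x. f x * cnj (g x) \<partial>lborel)"

definition l2_norm :: "(real^'n \<Rightarrow> complex) \<Rightarrow> real" where
  "l2_norm f = sqrt (\<integral>x. (cmod (f x))\<^sup>2 \<partial>lborel)"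

definition Lp_fun :: "real \<Rightarrow> ('a::euclidean_space \<Rightarrow> 'b::real_normed_vector) \<Rightarrow> bool" where
  "Lp_fun p f \<longleftrightarrow> f \<in> borel_measurable lborel \<and> integrable lborel (\<lambda>x. norm (f x) powr p)"

definition Linf_fun :: "('a::euclidean_space \<Rightarrow> 'b::real_normed_vector) \<Rightarrow> bool" where
  "Linf_fun f \<longleftrightarrow> f \<in> borel_measurable lborel \<and> (\<exists>C. AE x in lborel. norm (f x) \<le> C)"

definition pd :: "'n \<Rightarrow> (real^'n \<Rightarrow> complex) \<Rightarrow> real^'n \<Rightarrow> complex" where
  "pd i f = (\<lambda>x. frechet_derivative f (at x) (axis i 1))"

fun pds :: "'n list \<Rightarrow> (real^'n \<Rightarrow> complex) \<Rightarrow> real^'n \<Rightarrow> complex" where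
  "pds [] f = f"
| "pds (i # ks) f = pd i (pds ks f)"

definition laplacian :: "(real^'n::finite \<Rightarrow> complex) \<Rightarrow> real^'n \<Rightarrow> complex" where
  "laplacian f = (\<lambda>x. \<Sum>i\<in>UNIV. pd i (pd i f) x)"

definition test_fun :: "(real^'n::finite \<Rightarrow> complex) \<Rightarrow> bool" where
  "test_fun \<theta> \<longleftrightarrow> compact (closure {x. \<theta> x \<noteq> 0}) \<and>
     (\<forall>ks. continuous_on UNIV (pds ks \<theta>) \<and> (\<forall>x. pds ks \<theta> differentiable at x))"

definition has_weak_grad :: "(real^'n::finite \<Rightarrow> complex) \<Rightarrow> ('n \<Rightarrow> real^'n \<Rightarrow> complex) \<Rightarrow> bool" where
  "has_weak_grad \<psi> g \<longleftrightarrow> (\<forall>i. L2 (g i) \<and>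
     (\<forall>\<theta>. test_fun \<theta> \<longrightarrow> (\<integral>x. \<psi> x * pd i \<theta> x \<partial>lborel) = - (\<integral>x. g i x * \<theta> x \<partial>lborel)))"

definition H0_form :: "(real^'n::finite \<Rightarrow> real) \<Rightarrow> (real^'n \<Rightarrow> complex) \<Rightarrow> ('n \<Rightarrow> real^'n \<Rightarrow> complex)
    \<Rightarrow> (real^'n \<Rightarrow> complex) \<Rightarrow> complex" where
  "H0_form V \<psi> g \<theta> = (\<Sum>i\<in>UNIV. \<integral>x. g i x * cnj (pd i \<theta> x) \<partial>lborel)
      + (\<integral>x. complex_of_real (V x) * \<psi> x * cnj (\<theta> x) \<partial>lborel)"

text \<open>U is the unitary group e^{-i H_0 t} generated by the self-adjoint (form-defined) operator
  H_0 = -Delta + V: a strongly continuous unitary group on L^2 whose generator -iA satisfies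
  A \<subseteq> H_0. Since both are self-adjoint, A = H_0, so U is uniquely determined.\<close>

definition is_propagator :: "(real^'n::finite \<Rightarrow> real) \<Rightarrow> (real \<Rightarrow> (real^'n \<Rightarrow> complex) \<Rightarrow> (real^'n \<Rightarrow> complex)) \<Rightarrow> bool" where
  "is_propagator V U \<longleftrightarrow>
     (\<forall>t \<psi>. L2 \<psi> \<longrightarrow> L2 (U t \<psi>) \<and> l2_norm (U t \<psi>) = l2_norm \<psi>) \<and>
     (\<forall>t \<psi> \<phi>. L2 \<psi> \<longrightarrow> L2 \<phi> \<longrightarrow> l2_norm (\<lambda>x. \<psi> x - \<phi> x) = 0 \<longrightarrow>
         l2_norm (\<lambda>x. U t \<psi> x - U t \<phi> x) = 0) \<and>
     (\<forall>t \<psi> \<phi> a. L2 \<psi> \<longrightarrow> L2 \<phi> \<longrightarrow>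
         l2_norm (\<lambda>x. U t (\<lambda>y. \<psi> y + a * \<phi> y) x - (U t \<psi> x + a * U t \<phi> x)) = 0) \<and>
     (\<forall>\<psi>. L2 \<psi> \<longrightarrow> l2_norm (\<lambda>x. U 0 \<psi> x - \<psi> x) = 0) \<and>
     (\<forall>s t \<psi>. L2 \<psi> \<longrightarrow> l2_norm (\<lambda>x. U (s + t) \<psi> x - U s (U t \<psi>) x) = 0) \<and>
     (\<forall>\<psi> t0. L2 \<psi> \<longrightarrow> ((\<lambda>t. l2_norm (\<lambda>x. U t \<psi> x - U t0 \<psi> x)) \<longlongrightarrow> 0) (at t0)) \<and>
     (\<forall>\<psi> \<eta>. L2 \<psi> \<longrightarrow> L2 \<eta> \<longrightarrow>
         ((\<lambda>h. l2_norm (\<lambda>x. (U h \<psi> x - \<psi> x) / complex_of_real h + \<i> * \<eta> x)) \<longlongrightarrow> 0) (at 0) \<longrightarrow>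
         (\<exists>g. has_weak_grad \<psi> g \<and> (\<forall>\<theta>. test_fun \<theta> \<longrightarrow> H0_form V \<psi> g \<theta> = l2_inner \<eta> \<theta>)))"

text \<open>Eigenfunctions of H_0: H_0 phi = lambda phi, i.e. e^{-iH_0 t} phi = e^{-i lambda t} phi.\<close>

definition is_eigenfunction :: "(real \<Rightarrow> (real^'n::finite \<Rightarrow> complex) \<Rightarrow> (real^'n \<Rightarrow> complex))
    \<Rightarrow> real \<Rightarrow> (real^'n \<Rightarrow> complex) \<Rightarrow> bool" where
  "is_eigenfunction U lam \<phi> \<longleftrightarrow> L2 \<phi> \<and> l2_norm \<phi> \<noteq> 0 \<and>
     (\<forall>t. l2_norm (\<lambda>x. U t \<phi> x - exp (- \<i> * complex_of_real (lam * t)) * \<phi> x) = 0)"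

definition zero_energy_solution :: "(real^'n::finite \<Rightarrow> real) \<Rightarrow> (real^'n \<Rightarrow> complex) \<Rightarrow> bool" where
  "zero_energy_solution V \<psi> \<longleftrightarrow> \<psi> \<in> borel_measurable lborel \<and>
     (\<forall>\<theta>. test_fun \<theta> \<longrightarrow>
        integrable lborel (\<lambda>x. \<psi> x * laplacian \<theta> x) \<and>
        integrable lborel (\<lambda>x. complex_of_real (V x) * \<psi> x * \<theta> x) \<and>
        (\<integral>x. - \<psi> x * laplacian \<theta> x + complex_of_real (V x) * \<psi> x * \<theta> x \<partial>lborel) = 0)"

definition jbr :: "real^'n \<Rightarrow> real" where
  "jbr x = sqrt (1 + (norm x)\<^sup>2)"

definition resonance_class :: "(real^'n::finite \<Rightarrow> complex) \<Rightarrow> bool" where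
  "resonance_class \<psi> \<longleftrightarrow>
     (if CARD('n) = 2 then Linf_fun \<psi>
      else if CARD('n) = 3 then (\<forall>s>1/2. L2 (\<lambda>x. complex_of_real (jbr x powr (-s)) * \<psi> x))
      else if CARD('n) = 4 then (\<forall>s>0. L2 (\<lambda>x. complex_of_real (jbr x powr (-s)) * \<psi> x))
      else L2 \<psi>)"

definition zero_regular :: "(real^'n::finite \<Rightarrow> real) \<Rightarrow> bool" where
  "zero_regular V \<longleftrightarrow>
     (\<forall>\<psi>. zero_energy_solution V \<psi> \<and> (L2 \<psi> \<or> resonance_class \<psi>) \<longrightarrow>
        (AE x in lborel. \<psi> x = 0))"

text \<open>Fourier transform (of integrable functions) and Sobolev norms H^nu (defined by duality
  against test functions, up to a harmless constant factor).\<close>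

definition fourier :: "(real^'n::finite \<Rightarrow> complex) \<Rightarrow> real^'n \<Rightarrow> complex" where
  "fourier f \<xi> = (\<integral>x. f x * exp (- \<i> * complex_of_real (x \<bullet> \<xi>)) \<partial>lborel)"

definition sob_dual_norm :: "real \<Rightarrow> (real^'n::finite \<Rightarrow> complex) \<Rightarrow> real" where
  "sob_dual_norm \<nu> \<theta> = sqrt (\<integral>\<xi>. (1 + (norm \<xi>)\<^sup>2) powr (- \<nu>) * (cmod (fourier \<theta> \<xi>))\<^sup>2 \<partial>lborel)"

definition hnorm :: "real \<Rightarrow> (real^'n::finite \<Rightarrow> complex) \<Rightarrow> ereal" where
  "hnorm \<nu> f = (SUP \<theta>\<in>{\<theta>. test_fun \<theta> \<and> sob_dual_norm \<nu> \<theta> \<noteq> 0}.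
                  ereal (cmod (\<integral>x. f x * cnj (\<theta> x) \<partial>lborel) / sob_dual_norm \<nu> \<theta>))"

definition fourier_transform_L1 :: "(real^'n::finite \<Rightarrow> real) \<Rightarrow> bool" where
  "fourier_transform_L1 V \<longleftrightarrow> (\<exists>g. integrable lborel g \<and>
     (\<forall>\<theta>. test_fun \<theta> \<longrightarrow> integrable lborel (\<lambda>x. complex_of_real (V x) * fourier \<theta> x) \<and>
        (\<integral>x. complex_of_real (V x) * fourier \<theta> x \<partial>lborel) = (\<integral>\<xi>. g \<xi> * \<theta> \<xi> \<partial>lborel)))"

definition mult_bounded_Hs :: "real \<Rightarrow> (real^'n::finite \<Rightarrow> real) \<Rightarrow> bool" where
  "mult_bounded_Hs \<nu> W \<longleftrightarrow> (\<exists>C::real. \<forall>\<theta>. test_fun \<theta> \<longrightarrow>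
       hnorm \<nu> (\<lambda>x. complex_of_real (W x) * \<theta> x) \<le> ereal C * hnorm \<nu> \<theta>)"

definition decay_A :: "(real^'n::finite \<Rightarrow> real) \<Rightarrow> bool" where
  "decay_A V \<longleftrightarrow> V \<in> borel_measurable lborel \<and>
     (if CARD('n) = 2 then (\<exists>C \<epsilon>. \<epsilon> > 0 \<and> (\<forall>x. \<bar>V x\<bar> \<le> C * (1 + norm x) powr (-3 - \<epsilon>)))
      else if CARD('n) = 3 then (\<exists>\<epsilon>. 0 < \<epsilon> \<and> \<epsilon> < 1/2 \<and> Lp_fun (3/2 - \<epsilon>) V \<and> Lp_fun (3/2 + \<epsilon>) V)
      else fourier_transform_L1 V \<and>
           (\<exists>\<nu> \<gamma>. \<nu> > 0 \<and> \<gamma> > real CARD('n) + 4 \<and>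
               mult_bounded_Hs \<nu> (\<lambda>x. (1 + (norm x)\<^sup>2) powr (\<gamma> / 2) * V x)))"

definition P_disc :: "nat \<Rightarrow> (nat \<Rightarrow> real^'n \<Rightarrow> complex) \<Rightarrow> (real^'n \<Rightarrow> complex) \<Rightarrow> real^'n \<Rightarrow> complex" where
  "P_disc M \<phi> \<psi> = (\<lambda>x. \<Sum>j\<le>M. l2_inner \<psi> (\<phi> j) * \<phi> j x)"

definition u_ctrl :: "real \<Rightarrow> real \<Rightarrow> nat \<Rightarrow> (nat \<Rightarrow> real^'n \<Rightarrow> complex) \<Rightarrow> (real^'n \<Rightarrow> real)
    \<Rightarrow> (real^'n \<Rightarrow> complex) \<Rightarrow> real" where
  "u_ctrl c \<epsilon> M \<phi> \<mu> \<Psi> = c * ((1 - \<epsilon>) *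
       (\<Sum>j\<le>M. Im (l2_inner (\<lambda>x. complex_of_real (\<mu> x) * \<Psi> x) (\<phi> j) * l2_inner (\<phi> j) \<Psi>))
     + \<epsilon> * Im (l2_inner (\<lambda>x. complex_of_real (\<mu> x) * \<Psi> x) (\<phi> 0) * l2_inner (\<phi> 0) \<Psi>))"

text \<open>Weak solution of the closed-loop system on R^+ (Duhamel formula, tested weakly).\<close>

definition weak_solution :: "(real \<Rightarrow> (real^'n::finite \<Rightarrow> complex) \<Rightarrow> (real^'n \<Rightarrow> complex))
    \<Rightarrow> ((real^'n \<Rightarrow> complex) \<Rightarrow> real) \<Rightarrow> (real^'n \<Rightarrow> real) \<Rightarrow> (real^'n \<Rightarrow> complex)
    \<Rightarrow> (real \<Rightarrow> real^'n \<Rightarrow> complex) \<Rightarrow> bool" where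
  "weak_solution U u \<mu> \<Psi>0 \<Psi> \<longleftrightarrow>
     (\<forall>t\<ge>0. L2 (\<Psi> t) \<and> l2_norm (\<Psi> t) = 1) \<and>
     (\<forall>t0\<ge>0. ((\<lambda>t. l2_norm (\<lambda>x. \<Psi> t x - \<Psi> t0 x)) \<longlongrightarrow> 0) (at t0 within {0..})) \<and>
     (\<forall>t\<ge>0. \<forall>g. L2 g \<longrightarrow>
        l2_inner (\<Psi> t) g = l2_inner (U t \<Psi>0) g
          + \<i> * integral {0..t} (\<lambda>s. complex_of_real (u (\<Psi> s)) *
                 l2_inner (U (t - s) (\<lambda>x. complex_of_real (\<mu> x) * \<Psi> s x)) g))"

end

theory Submission
  imports Defs "HOL-Library.Diagonal_Subsequence"
begin

text \<open>Only the boundedness of the trajectory matters: \<open>\<Psi> t\<close> has unit norm for \<open>t \<ge> 0\<close>, so the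
  sequence \<open>\<Psi> m\<close> lies in the unit ball of \<open>L\<^sup>2\<close>, which is weakly sequentially compact.
  Compactness is proved constructively: Gram--Schmidt orthonormalises the sequence itself, the
  coefficients of \<open>\<Psi> m\<close> in this system lie in the unit ball of \<open>\<ell>\<^sup>2\<close>, a diagonal subsequence makes
  every coefficient converge, and completeness of \<open>L\<^sup>2\<close> (a fast Cauchy subsequence converges a.e.,
  Fatou controls the limit) sums the limit coefficients to \<open>\<Psi>inf\<close>. The discrete projections then
  converge strongly because \<open>P_disc\<close> has finite rank.\<close>

lemma borel_measurable_cnj [measurable]:
  "f \<in> borel_measurable M \<Longrightarrow> (\<lambda>x. cnj (f x)) \<in> borel_measurable M"
  by (rule borel_measurable_continuous_on[where f=cnj]) (auto intro: continuous_intros)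

lemma L2_zero: "L2 (\<lambda>x. 0)"
  by (simp add: L2_def)

lemma L2_add:
  assumes "L2 f" "L2 g" shows "L2 (\<lambda>x. f x + g x)"
proof -
  have [measurable]: "f \<in> borel_measurable lborel" "g \<in> borel_measurable lborel"
    using assms by (auto simp: L2_def)
  have sq_le: "(cmod (a + b))\<^sup>2 \<le> 2 * (cmod a)\<^sup>2 + 2 * (cmod b)\<^sup>2" for a b :: complex
  proof -
    have "(cmod (a + b))\<^sup>2 \<le> (cmod a + cmod b)\<^sup>2"
      by (simp add: norm_triangle_ineq power_mono)
    also have "\<dots> \<le> 2 * (cmod a)\<^sup>2 + 2 * (cmod b)\<^sup>2"
      using sum_squares_bound[of "cmod a" "cmod b"] by (simp add: power2_eq_square algebra_simps)
    finally show ?thesis .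
  qed
  have "integrable lborel (\<lambda>x. 2 * (cmod (f x))\<^sup>2 + 2 * (cmod (g x))\<^sup>2)"
    using assms by (auto simp: L2_def)
  then have "integrable lborel (\<lambda>x. (cmod (f x + g x))\<^sup>2)"
    by (rule Bochner_Integration.integrable_bound) (auto intro: sq_le)
  then show ?thesis
    by (simp add: L2_def)
qed

lemma L2_cmult: "L2 f \<Longrightarrow> L2 (\<lambda>x. a * f x)"
  unfolding L2_def by (auto simp: norm_mult power_mult_distrib)

lemma L2_diff: "L2 f \<Longrightarrow> L2 g \<Longrightarrow> L2 (\<lambda>x. f x - g x)"
  using L2_add[of f "\<lambda>x. (-1) * g x"] L2_cmult[of g "-1"] by simp

lemma L2_sum: "(\<And>k. k \<in> A \<Longrightarrow> L2 (f k)) \<Longrightarrow> L2 (\<lambda>x. \<Sum>k\<in>A. f k x)"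
proof (induction A rule: infinite_finite_induct)
  case (insert k A)
  then show ?case
    using L2_add[of "f k" "\<lambda>x. \<Sum>k\<in>A. f k x"] by simp
qed (simp_all add: L2_zero)

lemma L2_integrable_norm_mult:
  assumes "L2 f" "L2 g" shows "integrable lborel (\<lambda>x. cmod (f x) * cmod (g x))"
proof -
  have [measurable]: "f \<in> borel_measurable lborel" "g \<in> borel_measurable lborel"
    using assms by (auto simp: L2_def)
  have "integrable lborel (\<lambda>x. (cmod (f x))\<^sup>2 + (cmod (g x))\<^sup>2)"
    using assms by (auto simp: L2_def)
  then show ?thesis
  proof (rule Bochner_Integration.integrable_bound)
    show "AE x in lborel. norm (cmod (f x) * cmod (g x)) \<le> norm ((cmod (f x))\<^sup>2 + (cmod (g x))\<^sup>2)"
    proof (intro AE_I2)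
      fix x
      have "cmod (f x) * cmod (g x) \<le> (cmod (f x))\<^sup>2 + (cmod (g x))\<^sup>2"
        using sum_squares_bound[of "cmod (f x)" "cmod (g x)"] mult_nonneg_nonneg[OF norm_ge_zero norm_ge_zero, of "f x" "g x"]
        by linarith
      then show "norm (cmod (f x) * cmod (g x)) \<le> norm ((cmod (f x))\<^sup>2 + (cmod (g x))\<^sup>2)"
        by (simp add: abs_mult)
    qed
  qed measurable
qed

lemma L2_integrable_inner:
  assumes "L2 f" "L2 g" shows "integrable lborel (\<lambda>x. f x * cnj (g x))"
proof -
  have [measurable]: "f \<in> borel_measurable lborel" "g \<in> borel_measurable lborel"
    using assms by (auto simp: L2_def)
  show ?thesis
    by (rule Bochner_Integration.integrable_bound[OF L2_integrable_norm_mult[OF assms]])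
      (auto simp: norm_mult)
qed

lemma l2_norm_nonneg: "l2_norm f \<ge> 0"
  by (simp add: l2_norm_def)

lemma l2_norm_power2: "(l2_norm f)\<^sup>2 = (\<integral>x. (cmod (f x))\<^sup>2 \<partial>lborel)"
  by (simp add: l2_norm_def integral_nonneg_AE)

lemma l2_norm_cmult: "l2_norm (\<lambda>x. a * f x) = cmod a * l2_norm f"
  by (simp add: l2_norm_def norm_mult power_mult_distrib real_sqrt_mult)

lemma l2_norm_minus_commute: "l2_norm (\<lambda>x. f x - g x) = l2_norm (\<lambda>x. g x - f x)"
  by (simp add: l2_norm_def norm_minus_commute)

lemma L2_integral_norm_mult_le:
  assumes "L2 f" "L2 g"
  shows "(\<integral>x. cmod (f x) * cmod (g x) \<partial>lborel) \<le> l2_norm f * l2_norm g"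
proof -
  have [measurable]: "f \<in> borel_measurable lborel" "g \<in> borel_measurable lborel"
    using assms by (auto simp: L2_def)
  have sq: "ennreal ((l2_norm h)\<^sup>2) = (\<integral>\<^sup>+x. ennreal (cmod (h x)) ^ 2 \<partial>lborel)" if "L2 h" for h
    using that by (simp add: l2_norm_power2 ennreal_power nn_integral_eq_integral L2_def)
  have "ennreal ((\<integral>x. cmod (f x) * cmod (g x) \<partial>lborel)\<^sup>2)
      = (\<integral>\<^sup>+x. ennreal (cmod (f x)) * ennreal (cmod (g x)) \<partial>lborel)\<^sup>2"
    using L2_integrable_norm_mult[OF assms]
    by (simp add: ennreal_power ennreal_mult[symmetric] nn_integral_eq_integral)
  also have "\<dots> \<le> (\<integral>\<^sup>+x. ennreal (cmod (f x)) ^ 2 \<partial>lborel) * (\<integral>\<^sup>+x. ennreal (cmod (g x)) ^ 2 \<partial>lborel)"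
    by (rule Cauchy_Schwarz_nn_integral) measurable
  also have "\<dots> = ennreal ((l2_norm f * l2_norm g)\<^sup>2)"
    using assms by (simp add: sq[symmetric] ennreal_mult power_mult_distrib)
  finally show ?thesis
    by (auto simp: ennreal_le_iff l2_norm_nonneg intro: power2_le_imp_le)
qed

lemma l2_norm_triangle:
  assumes "L2 f" "L2 g"
  shows "l2_norm (\<lambda>x. f x + g x) \<le> l2_norm f + l2_norm g"
proof -
  have [measurable]: "f \<in> borel_measurable lborel" "g \<in> borel_measurable lborel"
    using assms by (auto simp: L2_def)
  have "(l2_norm (\<lambda>x. f x + g x))\<^sup>2 = (\<integral>x. (cmod (f x + g x))\<^sup>2 \<partial>lborel)"
    by (rule l2_norm_power2)
  also have "\<dots> \<le> (\<integral>x. (cmod (f x))\<^sup>2 + 2 * (cmod (f x) * cmod (g x)) + (cmod (g x))\<^sup>2 \<partial>lborel)"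
  proof (rule integral_mono)
    show "integrable lborel (\<lambda>x. (cmod (f x + g x))\<^sup>2)"
      using L2_add[OF assms] by (simp add: L2_def)
    show "integrable lborel (\<lambda>x. (cmod (f x))\<^sup>2 + 2 * (cmod (f x) * cmod (g x)) + (cmod (g x))\<^sup>2)"
      using assms L2_integrable_norm_mult[OF assms] by (auto simp: L2_def)
    show "(cmod (f x + g x))\<^sup>2 \<le> (cmod (f x))\<^sup>2 + 2 * (cmod (f x) * cmod (g x)) + (cmod (g x))\<^sup>2" for x
      using power_mono[OF norm_triangle_ineq[of "f x" "g x"], of 2] by (simp add: power2_sum)
  qed
  also have "\<dots> = (l2_norm f)\<^sup>2 + 2 * (\<integral>x. cmod (f x) * cmod (g x) \<partial>lborel) + (l2_norm g)\<^sup>2"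
    using assms L2_integrable_norm_mult[OF assms] by (simp add: L2_def l2_norm_power2)
  also have "\<dots> \<le> (l2_norm f + l2_norm g)\<^sup>2"
    using L2_integral_norm_mult_le[OF assms] by (simp add: power2_sum)
  finally show ?thesis
    by (rule power2_le_imp_le) (simp add: l2_norm_nonneg)
qed

lemma l2_norm_sum_le:
  "(\<And>k. k \<in> A \<Longrightarrow> L2 (f k)) \<Longrightarrow> l2_norm (\<lambda>x. \<Sum>k\<in>A. f k x) \<le> (\<Sum>k\<in>A. l2_norm (f k))"
proof (induction A rule: infinite_finite_induct)
  case (insert k A)
  have "l2_norm (\<lambda>x. f k x + (\<Sum>k\<in>A. f k x)) \<le> l2_norm (f k) + l2_norm (\<lambda>x. \<Sum>k\<in>A. f k x)"
    using insert by (intro l2_norm_triangle L2_sum) auto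
  with insert show ?case by simp
qed (simp_all add: l2_norm_def)

lemma l2_inner_add_left:
  assumes "L2 f" "L2 g" "L2 h"
  shows "l2_inner (\<lambda>x. f x + g x) h = l2_inner f h + l2_inner g h"
  using L2_integrable_inner[OF assms(1,3)] L2_integrable_inner[OF assms(2,3)]
  by (simp add: l2_inner_def distrib_right)

lemma l2_inner_diff_left:
  assumes "L2 f" "L2 g" "L2 h"
  shows "l2_inner (\<lambda>x. f x - g x) h = l2_inner f h - l2_inner g h"
  using L2_integrable_inner[OF assms(1,3)] L2_integrable_inner[OF assms(2,3)]
  by (simp add: l2_inner_def left_diff_distrib)

lemma l2_inner_diff_right:
  assumes "L2 f" "L2 g" "L2 h"
  shows "l2_inner f (\<lambda>x. g x - h x) = l2_inner f g - l2_inner f h"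
  using L2_integrable_inner[OF assms(1,2)] L2_integrable_inner[OF assms(1,3)]
  by (simp add: l2_inner_def right_diff_distrib)

lemma l2_inner_zero_left [simp]: "l2_inner (\<lambda>x. 0) h = 0"
  by (simp add: l2_inner_def)

lemma l2_inner_cmult_left: "l2_inner (\<lambda>x. a * f x) h = a * l2_inner f h"
  by (simp add: l2_inner_def mult.assoc)

lemma cnj_l2_inner: "cnj (l2_inner f g) = l2_inner g f"
proof -
  have "cnj (l2_inner f g) = (\<integral>x. cnj (f x * cnj (g x)) \<partial>lborel)"
    unfolding l2_inner_def by (rule Bochner_Integration.integral_cnj[symmetric])
  then show ?thesis
    by (simp add: l2_inner_def mult.commute)
qed

lemma l2_inner_sum_left:
  assumes "\<And>k. k \<in> A \<Longrightarrow> L2 (f k)" "L2 h"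
  shows "l2_inner (\<lambda>x. \<Sum>k\<in>A. f k x) h = (\<Sum>k\<in>A. l2_inner (f k) h)"
  using assms(1)
proof (induction A rule: infinite_finite_induct)
  case (insert k A)
  then show ?case
    using l2_inner_add_left[OF _ L2_sum assms(2), of "f k" A f] by simp
qed simp_all

lemma l2_inner_sum_right:
  assumes "\<And>k. k \<in> A \<Longrightarrow> L2 (f k)" "L2 h"
  shows "l2_inner h (\<lambda>x. \<Sum>k\<in>A. a k * f k x) = (\<Sum>k\<in>A. cnj (a k) * l2_inner h (f k))"
proof -
  have "l2_inner (\<lambda>x. \<Sum>k\<in>A. a k * f k x) h = (\<Sum>k\<in>A. a k * l2_inner (f k) h)"
    using assms by (simp add: l2_inner_sum_left L2_cmult l2_inner_cmult_left)
  then have "cnj (l2_inner (\<lambda>x. \<Sum>k\<in>A. a k * f k x) h) = (\<Sum>k\<in>A. cnj (a k) * l2_inner h (f k))"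
    by (simp add: cnj_l2_inner)
  then show ?thesis
    by (simp add: cnj_l2_inner)
qed

lemma l2_inner_self: "l2_inner f f = complex_of_real ((l2_norm f)\<^sup>2)"
proof -
  have "l2_inner f f = (\<integral>x. complex_of_real ((cmod (f x))\<^sup>2) \<partial>lborel)"
    unfolding l2_inner_def by (simp only: complex_norm_square)
  then show ?thesis
    by (simp only: integral_complex_of_real l2_norm_power2)
qed

lemma l2_inner_norm_le:
  assumes "L2 f" "L2 g" shows "cmod (l2_inner f g) \<le> l2_norm f * l2_norm g"
proof -
  have "cmod (l2_inner f g) \<le> (\<integral>x. cmod (f x) * cmod (g x) \<partial>lborel)"
    unfolding l2_inner_def using integral_norm_bound[of lborel "\<lambda>x. f x * cnj (g x)"]
    by (simp add: norm_mult)
  also have "\<dots> \<le> l2_norm f * l2_norm g"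
    by (rule L2_integral_norm_mult_le[OF assms])
  finally show ?thesis .
qed

text \<open>The weights \<open>4^k\<close> keep the series integrable while forcing the terms to be
  \<open>O(2^-k)\<close> almost everywhere.\<close>

lemma summable_if_weighted_square_sum_finite:
  fixes z :: "nat \<Rightarrow> complex"
  assumes "(\<Sum>k. ennreal (4^k * (cmod (z k))\<^sup>2)) < \<infinity>"
  shows "summable z"
proof -
  define c where "c = enn2real (\<Sum>k. ennreal (4^k * (cmod (z k))\<^sup>2))"
  have c: "0 \<le> c" "(\<Sum>k. ennreal (4^k * (cmod (z k))\<^sup>2)) = ennreal c"
    using assms by (auto simp: c_def less_top)
  have bound: "cmod (z k) \<le> sqrt c * (1/2)^k" for k
  proof -
    have "(\<Sum>j\<in>{k}. ennreal (4^j * (cmod (z j))\<^sup>2)) \<le> (\<Sum>k. ennreal (4^k * (cmod (z k))\<^sup>2))"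
      by (rule sum_le_suminf) (auto intro: summableI)
    then have "4^k * (cmod (z k))\<^sup>2 \<le> c"
      using c by simp
    then have "(cmod (z k))\<^sup>2 \<le> c * (1/4)^k"
      by (simp add: power_divide field_simps)
    also have "(1/4::real)^k = ((1/2)^k)\<^sup>2"
      by (simp add: power2_eq_square flip: power_mult_distrib)
    also have "c * ((1/2)^k)\<^sup>2 = (sqrt c * (1/2)^k)\<^sup>2"
      using c by (simp add: power_mult_distrib)
    finally show ?thesis
      by (rule power2_le_imp_le) (simp add: c)
  qed
  have "summable (\<lambda>k. sqrt c * (1/2::real)^k)"
    by (intro summable_mult summable_geometric) simp
  then show ?thesis
    by (rule summable_comparison_test[rotated]) (use bound in blast)
qed

lemma L2_AE_weighted_square_sum_finite:
  assumes L: "\<And>k. L2 (d k)" and small: "\<And>k. l2_norm (d k) \<le> (1/4)^k"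
  shows "AE x in lborel. (\<Sum>k. ennreal (4^k * (cmod (d k x))\<^sup>2)) < \<infinity>"
proof (rule finite_nn_integral_imp_ae_finite)
  have [measurable]: "d k \<in> borel_measurable lborel" for k
    using L by (simp add: L2_def)
  show "(\<lambda>x. \<Sum>k. ennreal (4^k * (cmod (d k x))\<^sup>2)) \<in> borel_measurable lborel"
    by measurable
  have "(\<integral>\<^sup>+x. (\<Sum>k. ennreal (4^k * (cmod (d k x))\<^sup>2)) \<partial>lborel)
      = (\<Sum>k. \<integral>\<^sup>+x. ennreal (4^k * (cmod (d k x))\<^sup>2) \<partial>lborel)"
    by (rule nn_integral_suminf) measurable
  also have "\<dots> \<le> (\<Sum>k. ennreal ((1/4)^k))"
  proof (intro suminf_le summableI)
    fix k
    have "(l2_norm (d k))\<^sup>2 \<le> ((1/4)^k)\<^sup>2"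
      using small[of k] by (intro power_mono l2_norm_nonneg)
    also have "((1/4)^k)\<^sup>2 = ((1/16)^k :: real)"
      by (simp add: power2_eq_square power_mult_distrib[symmetric])
    finally have "4^k * (l2_norm (d k))\<^sup>2 \<le> 4^k * ((1/16)^k :: real)"
      by (intro mult_left_mono) simp_all
    also have "4^k * (1/16)^k = ((1/4)^k :: real)"
      by (simp add: power_mult_distrib[symmetric])
    finally have "4^k * (l2_norm (d k))\<^sup>2 \<le> (1/4::real)^k" .
    then show "(\<integral>\<^sup>+x. ennreal (4^k * (cmod (d k x))\<^sup>2) \<partial>lborel) \<le> ennreal ((1/4)^k)"
      using L[of k] by (simp add: nn_integral_eq_integral L2_def l2_norm_power2)
  qed
  also have "\<dots> = ennreal (\<Sum>k. (1/4)^k)"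
    by (rule suminf_ennreal2) auto
  finally show "(\<integral>\<^sup>+x. (\<Sum>k. ennreal (4^k * (cmod (d k x))\<^sup>2)) \<partial>lborel) < \<infinity>"
    by (simp add: le_less_trans)
qed

lemma L2_AE_convergent_if_fast_Cauchy:
  fixes f :: "nat \<Rightarrow> real^'n::finite \<Rightarrow> complex"
  assumes L: "\<And>k. L2 (f k)"
    and fast: "\<And>k. l2_norm (\<lambda>x. f (Suc k) x - f k x) \<le> (1/4)^k"
  shows "AE x in lborel. convergent (\<lambda>k. f k x)"
proof -
  have "AE x in lborel. (\<Sum>k. ennreal (4^k * (cmod (f (Suc k) x - f k x))\<^sup>2)) < \<infinity>"
    using L fast by (intro L2_AE_weighted_square_sum_finite L2_diff)
  then show ?thesis
  proof eventually_elim
    case (elim x)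
    then have "convergent (\<lambda>n. (\<Sum>k<n. f (Suc k) x - f k x) + f 0 x)"
      by (intro convergent_add convergent_const summable_if_weighted_square_sum_finite
          summable_iff_convergent[THEN iffD1])
    then show ?case
      by (simp add: sum_lessThan_telescope[of "\<lambda>k. f k x"])
  qed
qed

lemma L2_AE_limit_norm_le:
  assumes L: "\<And>i. L2 (g i)" and [measurable]: "h \<in> borel_measurable lborel"
    and lim: "AE x in lborel. (\<lambda>i. g i x) \<longlonglongrightarrow> h x"
    and bound: "eventually (\<lambda>i. l2_norm (g i) \<le> e) sequentially"
  shows "L2 h" "l2_norm h \<le> e"
proof -
  have [measurable]: "g i \<in> borel_measurable lborel" for i
    using L by (simp add: L2_def)
  have "\<exists>i. l2_norm (g i) \<le> e"
    using bound by (auto simp: eventually_sequentially)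
  then have e: "0 \<le> e"
    using l2_norm_nonneg order_trans by blast
  have "AE x in lborel. liminf (\<lambda>i. ennreal ((cmod (g i x))\<^sup>2)) = ennreal ((cmod (h x))\<^sup>2)"
    using lim
  proof eventually_elim
    case (elim x)
    then have "(\<lambda>i. ennreal ((cmod (g i x))\<^sup>2)) \<longlonglongrightarrow> ennreal ((cmod (h x))\<^sup>2)"
      by (intro tendsto_ennrealI tendsto_intros)
    then show ?case
      by (rule lim_imp_Liminf[rotated]) simp
  qed
  then have "(\<integral>\<^sup>+x. ennreal ((cmod (h x))\<^sup>2) \<partial>lborel)
      = (\<integral>\<^sup>+x. liminf (\<lambda>i. ennreal ((cmod (g i x))\<^sup>2)) \<partial>lborel)"
    by (intro nn_integral_cong_AE) (auto elim: eventually_mono)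
  also have "\<dots> \<le> liminf (\<lambda>i. \<integral>\<^sup>+x. ennreal ((cmod (g i x))\<^sup>2) \<partial>lborel)"
    by (rule nn_integral_liminf) measurable
  also have "\<dots> \<le> liminf (\<lambda>i. ennreal (e\<^sup>2))"
  proof (rule Liminf_mono)
    show "eventually (\<lambda>i. (\<integral>\<^sup>+x. ennreal ((cmod (g i x))\<^sup>2) \<partial>lborel) \<le> ennreal (e\<^sup>2)) sequentially"
      using bound
    proof eventually_elim
      case (elim i)
      then have "(l2_norm (g i))\<^sup>2 \<le> e\<^sup>2"
        by (intro power_mono l2_norm_nonneg)
      then show ?case
        using L[of i] by (simp add: nn_integral_eq_integral L2_def l2_norm_power2)
    qed
  qed
  also have "\<dots> = ennreal (e\<^sup>2)"
    by (simp add: Liminf_const)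
  finally have I: "(\<integral>\<^sup>+x. ennreal ((cmod (h x))\<^sup>2) \<partial>lborel) \<le> ennreal (e\<^sup>2)" .
  then have "integrable lborel (\<lambda>x. (cmod (h x))\<^sup>2)"
    by (intro integrableI_nonneg) (auto simp: le_less_trans)
  then show "L2 h"
    by (simp add: L2_def)
  then have "(l2_norm h)\<^sup>2 \<le> e\<^sup>2"
    using I by (simp add: nn_integral_eq_integral L2_def l2_norm_power2)
  then show "l2_norm h \<le> e"
    using e by (rule power2_le_imp_le)
qed

lemma exists_strict_mono_above: "\<exists>r::nat \<Rightarrow> nat. strict_mono r \<and> (\<forall>k. N k \<le> r k)"
proof (intro exI conjI allI)
  show "strict_mono (\<lambda>k. (\<Sum>m\<le>k. N m) + k)"
    by (rule strict_mono_Suc_iff[THEN iffD2]) simp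
  show "N k \<le> (\<Sum>m\<le>k. N m) + k" for k
    by (rule trans_le_add1, rule member_le_sum) auto
qed

lemma L2_Cauchy_AE_convergent_subseq:
  fixes f :: "nat \<Rightarrow> real^'n::finite \<Rightarrow> complex"
  assumes L: "\<And>i. L2 (f i)"
    and Cauchy: "\<And>e. e > 0 \<Longrightarrow> \<exists>N. \<forall>i\<ge>N. \<forall>j\<ge>N. l2_norm (\<lambda>x. f i x - f j x) < e"
  shows "\<exists>r. strict_mono r \<and> (AE x in lborel. convergent (\<lambda>k. f (r k) x))"
proof -
  obtain N where N: "\<And>k i j. N k \<le> i \<Longrightarrow> N k \<le> j \<Longrightarrow> l2_norm (\<lambda>x. f i x - f j x) < (1/4)^k"
    using Cauchy[of "(1/4)^_"] by (metis zero_less_divide_1_iff zero_less_numeral zero_less_power)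
  obtain r where r: "strict_mono r" and rN: "\<And>k. N k \<le> r k"
    using exists_strict_mono_above[of N] by blast
  moreover have "AE x in lborel. convergent (\<lambda>k. f (r k) x)"
  proof (rule L2_AE_convergent_if_fast_Cauchy)
    show "l2_norm (\<lambda>x. f (r (Suc k)) x - f (r k) x) \<le> (1/4)^k" for k
      using N[OF order_trans[OF rN strict_mono_leD[OF r, of k "Suc k"]] rN] by simp
  qed (rule L)
  ultimately show ?thesis
    by blast
qed

lemma L2_Cauchy_convergent:
  fixes f :: "nat \<Rightarrow> real^'n::finite \<Rightarrow> complex"
  assumes L: "\<And>i. L2 (f i)"
    and Cauchy: "\<And>e. e > 0 \<Longrightarrow> \<exists>N. \<forall>i\<ge>N. \<forall>j\<ge>N. l2_norm (\<lambda>x. f i x - f j x) < e"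
  shows "\<exists>y. L2 y \<and> (\<lambda>i. l2_norm (\<lambda>x. f i x - y x)) \<longlonglongrightarrow> 0"
proof -
  have [measurable]: "f i \<in> borel_measurable lborel" for i
    using L by (simp add: L2_def)
  obtain r where r: "strict_mono r" and "AE x in lborel. convergent (\<lambda>k. f (r k) x)"
    using L2_Cauchy_AE_convergent_subseq[OF L Cauchy] by blast
  then have lim: "AE x in lborel. (\<lambda>k. f (r k) x) \<longlonglongrightarrow> lim (\<lambda>k. f (r k) x)"
    by (simp add: convergent_LIMSEQ_iff)
  define y where "y x = lim (\<lambda>k. f (r k) x)" for x
  have close: "L2 (\<lambda>x. f m x - y x) \<and> l2_norm (\<lambda>x. f m x - y x) \<le> e"
    if M: "\<forall>i\<ge>M. \<forall>j\<ge>M. l2_norm (\<lambda>x. f i x - f j x) < e" and "M \<le> m" for e M m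
  proof (intro conjI)
    have "eventually (\<lambda>i. M \<le> r i) sequentially"
      using filterlim_subseq[OF r] by (simp add: filterlim_at_top)
    then have "eventually (\<lambda>i. l2_norm (\<lambda>x. f m x - f (r i) x) \<le> e) sequentially"
      by eventually_elim (use M \<open>M \<le> m\<close> in \<open>auto intro: less_imp_le\<close>)
    moreover have "AE x in lborel. (\<lambda>i. f m x - f (r i) x) \<longlonglongrightarrow> f m x - y x"
      using lim by eventually_elim (auto simp: y_def intro: tendsto_diff)
    ultimately show "L2 (\<lambda>x. f m x - y x)" "l2_norm (\<lambda>x. f m x - y x) \<le> e"
      using L2_AE_limit_norm_le[of "\<lambda>i x. f m x - f (r i) x" "\<lambda>x. f m x - y x" e]
      by (auto simp: y_def intro: L2_diff L)
  qed
  obtain M where "\<forall>i\<ge>M. \<forall>j\<ge>M. l2_norm (\<lambda>x. f i x - f j x) < 1"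
    using Cauchy[of 1] by auto
  then have "L2 (\<lambda>x. f M x - y x)"
    using close[of M 1 M] by simp
  from L2_diff[OF L[of M] this] have "L2 y"
    by simp
  moreover have "(\<lambda>i. l2_norm (\<lambda>x. f i x - y x)) \<longlonglongrightarrow> 0"
  proof (rule LIMSEQ_I)
    fix e :: real
    assume "e > 0"
    then obtain M where M: "\<forall>i\<ge>M. \<forall>j\<ge>M. l2_norm (\<lambda>x. f i x - f j x) < e/2"
      using Cauchy[of "e/2"] by auto
    show "\<exists>M. \<forall>m\<ge>M. norm (l2_norm (\<lambda>x. f m x - y x) - 0) < e"
    proof (intro exI allI impI)
      fix m
      assume "M \<le> m"
      then have "l2_norm (\<lambda>x. f m x - y x) \<le> e/2"
        using close[OF M] by blast
      then show "norm (l2_norm (\<lambda>x. f m x - y x) - 0) < e"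
        using \<open>e > 0\<close> by (simp add: l2_norm_nonneg)
    qed
  qed
  ultimately show ?thesis
    by blast
qed

lemma cnj_mult_self: "cnj z * z = complex_of_real ((cmod z)\<^sup>2)"
  using complex_norm_square[of z] by (simp add: mult.commute)

lemma l2_inner_absorb:
  assumes "L2 g" "L2 u" "l2_norm u = 0 \<or> l2_norm u = 1"
  shows "l2_inner g u * l2_inner u u = l2_inner g u"
  using assms(3) l2_inner_norm_le[OF assms(1,2)] by (auto simp: l2_inner_self)

locale l2_orthonormal_or_zero =
  fixes e :: "nat \<Rightarrow> real^'n::finite \<Rightarrow> complex"
  assumes L2: "\<And>k. L2 (e k)"
    and norm_0_1: "\<And>k. l2_norm (e k) = 0 \<or> l2_norm (e k) = 1"
    and orthogonal: "\<And>i j. i \<noteq> j \<Longrightarrow> l2_inner (e i) (e j) = 0"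
begin

lemma inner_sum_left:
  assumes "finite A"
  shows "l2_inner (\<lambda>z. \<Sum>j\<in>A. c j * e j z) (e k) = (if k \<in> A then c k * l2_inner (e k) (e k) else 0)"
proof -
  have "l2_inner (\<lambda>z. \<Sum>j\<in>A. c j * e j z) (e k) = (\<Sum>j\<in>A. c j * l2_inner (e j) (e k))"
    by (simp add: l2_inner_sum_left L2_cmult L2 l2_inner_cmult_left)
  also have "\<dots> = (\<Sum>j\<in>A. if j = k then c k * l2_inner (e k) (e k) else 0)"
    by (rule sum.cong) (auto simp: orthogonal)
  finally show ?thesis
    using assms by simp
qed

lemma norm_sum_le:
  assumes "finite A"
  shows "(l2_norm (\<lambda>z. \<Sum>j\<in>A. c j * e j z))\<^sup>2 \<le> (\<Sum>j\<in>A. (cmod (c j))\<^sup>2)"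
proof -
  let ?s = "\<lambda>z. \<Sum>j\<in>A. c j * e j z"
  have "complex_of_real ((l2_norm ?s)\<^sup>2) = l2_inner ?s ?s"
    by (rule l2_inner_self[symmetric])
  also have "\<dots> = (\<Sum>k\<in>A. cnj (c k) * l2_inner ?s (e k))"
    by (intro l2_inner_sum_right L2_sum L2_cmult L2)
  also have "\<dots> = complex_of_real (\<Sum>k\<in>A. (cmod (c k))\<^sup>2 * (l2_norm (e k))\<^sup>2)"
    unfolding of_real_sum using assms
    by (intro sum.cong refl) (simp add: inner_sum_left l2_inner_self cnj_mult_self)
  finally have "(l2_norm ?s)\<^sup>2 = (\<Sum>k\<in>A. (cmod (c k))\<^sup>2 * (l2_norm (e k))\<^sup>2)"
    by (simp only: of_real_eq_iff)
  also have "\<dots> \<le> (\<Sum>k\<in>A. (cmod (c k))\<^sup>2)"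
  proof (intro sum_mono)
    fix k
    show "(cmod (c k))\<^sup>2 * (l2_norm (e k))\<^sup>2 \<le> (cmod (c k))\<^sup>2"
      using norm_0_1[of k] by auto
  qed
  finally show ?thesis .
qed

lemma bessel_inequality:
  assumes "finite A" "L2 g"
  shows "(\<Sum>k\<in>A. (cmod (l2_inner g (e k)))\<^sup>2) \<le> (l2_norm g)\<^sup>2"
proof -
  define a where "a k = l2_inner g (e k)" for k
  define h where "h = (\<lambda>z. g z - (\<Sum>j\<in>A. a j * e j z))"
  have L2_proj: "L2 (\<lambda>z. \<Sum>j\<in>A. a j * e j z)"
    by (intro L2_sum L2_cmult L2)
  have "L2 h"
    unfolding h_def by (intro L2_diff L2_proj assms)
  have "l2_inner h (e k) = 0" if "k \<in> A" for k
  proof -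
    have "l2_inner h (e k) = a k - a k * l2_inner (e k) (e k)"
      unfolding h_def
      by (subst l2_inner_diff_left[OF assms(2) L2_proj L2]) (simp add: inner_sum_left assms that a_def)
    then show ?thesis
      using l2_inner_absorb[OF assms(2) L2 norm_0_1] by (simp add: a_def)
  qed
  then have "l2_inner (e k) h = 0" if "k \<in> A" for k
    using that cnj_l2_inner[of h "e k"] by simp
  then have "l2_inner (\<lambda>z. \<Sum>j\<in>A. a j * e j z) h = 0"
    using \<open>L2 h\<close> by (simp add: l2_inner_sum_left L2_cmult L2 l2_inner_cmult_left)
  then have "complex_of_real ((l2_norm h)\<^sup>2) = l2_inner g h"
    unfolding l2_inner_self[symmetric]
    by (subst (1) h_def, subst l2_inner_diff_left[OF assms(2) L2_proj \<open>L2 h\<close>]) simp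
  also have "\<dots> = l2_inner g g - (\<Sum>k\<in>A. cnj (a k) * l2_inner g (e k))"
    unfolding h_def
    by (simp add: l2_inner_diff_right[OF assms(2) assms(2) L2_proj] l2_inner_sum_right L2 assms)
  also have "\<dots> = complex_of_real ((l2_norm g)\<^sup>2 - (\<Sum>k\<in>A. (cmod (a k))\<^sup>2))"
    unfolding of_real_diff of_real_sum l2_inner_self a_def cnj_mult_self ..
  finally have "(l2_norm h)\<^sup>2 = (l2_norm g)\<^sup>2 - (\<Sum>k\<in>A. (cmod (a k))\<^sup>2)"
    by (simp only: of_real_eq_iff)
  then show ?thesis
    using zero_le_power2[of "l2_norm h"] by (simp add: a_def)
qed

end

text \<open>A null residual is divided by its zero norm, giving the zero function; hence the
  Gram--Schmidt family may contain zero vectors.\<close>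

function gram_schmidt :: "(nat \<Rightarrow> real^'n::finite \<Rightarrow> complex) \<Rightarrow> nat \<Rightarrow> real^'n \<Rightarrow> complex" where
  "gram_schmidt x k =
     (let r = (\<lambda>z. x k z - (\<Sum>j<k. l2_inner (x k) (gram_schmidt x j) * gram_schmidt x j z))
      in (\<lambda>z. r z / complex_of_real (l2_norm r)))"
  by auto
termination
  by (relation "Wellfounded.measure snd") auto

definition gs_residual :: "(nat \<Rightarrow> real^'n::finite \<Rightarrow> complex) \<Rightarrow> nat \<Rightarrow> real^'n \<Rightarrow> complex" where
  "gs_residual x k = (\<lambda>z. x k z - (\<Sum>j<k. l2_inner (x k) (gram_schmidt x j) * gram_schmidt x j z))"

declare gram_schmidt.simps [simp del]

lemma gram_schmidt_eq:
  "gram_schmidt x k = (\<lambda>z. (1 / complex_of_real (l2_norm (gs_residual x k))) * gs_residual x k z)"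
  by (subst gram_schmidt.simps) (simp add: Let_def gs_residual_def)

context
  fixes x :: "nat \<Rightarrow> real^'n::finite \<Rightarrow> complex"
  assumes L2_x: "\<And>k. L2 (x k)"
begin

lemma L2_gram_schmidt: "L2 (gram_schmidt x k)"
proof (induction k rule: less_induct)
  case (less k)
  have "L2 (gs_residual x k)"
    unfolding gs_residual_def by (intro L2_diff L2_x L2_sum L2_cmult less) auto
  then show ?case
    unfolding gram_schmidt_eq by (rule L2_cmult)
qed

lemma L2_gs_residual: "L2 (gs_residual x k)"
  unfolding gs_residual_def by (intro L2_diff L2_x L2_sum L2_cmult L2_gram_schmidt)

lemma gs_residual_eq:
  "l2_norm (gs_residual x k) \<noteq> 0 \<Longrightarrow>
     gs_residual x k z = complex_of_real (l2_norm (gs_residual x k)) * gram_schmidt x k z"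
  by (simp add: gram_schmidt_eq)

lemma l2_norm_gram_schmidt:
  "l2_norm (gram_schmidt x k) = (if l2_norm (gs_residual x k) = 0 then 0 else 1)"
proof -
  have "l2_norm (gram_schmidt x k) = cmod (1 / complex_of_real (l2_norm (gs_residual x k))) * l2_norm (gs_residual x k)"
    unfolding gram_schmidt_eq by (rule l2_norm_cmult)
  then show ?thesis
    by (simp add: norm_divide l2_norm_nonneg)
qed

lemma l2_inner_gram_schmidt_less:
  "i < k \<Longrightarrow> l2_inner (gram_schmidt x k) (gram_schmidt x i) = 0"
proof (induction k arbitrary: i rule: less_induct)
  case (less k)
  let ?e = "gram_schmidt x"
  have orth: "l2_inner (?e j) (?e i) = 0" if "j < k" "j \<noteq> i" for j
  proof (cases "i < j")
    case True
    then show ?thesis using less.IH[OF that(1)] by simp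
  next
    case False
    then have "l2_inner (?e i) (?e j) = 0"
      using less that by simp
    then show ?thesis
      using cnj_l2_inner[of "?e i" "?e j"] by simp
  qed
  have "l2_inner (gs_residual x k) (?e i)
      = l2_inner (x k) (?e i) - (\<Sum>j<k. l2_inner (x k) (?e j) * l2_inner (?e j) (?e i))"
    unfolding gs_residual_def
    by (simp add: l2_inner_diff_left L2_x L2_sum L2_cmult L2_gram_schmidt l2_inner_sum_left
        l2_inner_cmult_left)
  also have "(\<Sum>j<k. l2_inner (x k) (?e j) * l2_inner (?e j) (?e i))
      = l2_inner (x k) (?e i) * l2_inner (?e i) (?e i)"
    using less.prems by (subst sum.remove[of _ i]) (auto simp: orth intro!: sum.neutral)
  also have "\<dots> = l2_inner (x k) (?e i)"
    using l2_norm_gram_schmidt[of i] by (intro l2_inner_absorb L2_x L2_gram_schmidt) simp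
  finally have "l2_inner (gs_residual x k) (?e i) = 0"
    by simp
  then show ?case
    by (subst (1) gram_schmidt_eq, subst l2_inner_cmult_left) simp
qed

lemma gram_schmidt_orthonormal_or_zero: "l2_orthonormal_or_zero (gram_schmidt x)"
proof
  show "L2 (gram_schmidt x k)" for k
    by (rule L2_gram_schmidt)
  show "l2_norm (gram_schmidt x k) = 0 \<or> l2_norm (gram_schmidt x k) = 1" for k
    by (simp add: l2_norm_gram_schmidt)
  show "l2_inner (gram_schmidt x i) (gram_schmidt x j) = 0" if "i \<noteq> j" for i j
  proof (cases "j < i")
    case True
    then show ?thesis by (rule l2_inner_gram_schmidt_less)
  next
    case False
    with that have "l2_inner (gram_schmidt x j) (gram_schmidt x i) = 0"
      by (intro l2_inner_gram_schmidt_less) simp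
    then show ?thesis
      using cnj_l2_inner[of "gram_schmidt x j" "gram_schmidt x i"] by simp
  qed
qed

lemma l2_norm_gram_schmidt_expansion:
  "l2_norm (\<lambda>z. x k z - (\<Sum>j\<le>k. l2_inner (x k) (gram_schmidt x j) * gram_schmidt x j z)) = 0"
proof (cases "l2_norm (gs_residual x k) = 0")
  case True
  then have "gram_schmidt x k = (\<lambda>z. 0)"
    by (simp add: gram_schmidt_eq)
  with True show ?thesis
    by (simp add: gs_residual_def lessThan_Suc_atMost[symmetric])
next
  case False
  interpret l2_orthonormal_or_zero "gram_schmidt x"
    by (rule gram_schmidt_orthonormal_or_zero)
  let ?e = "gram_schmidt x" and ?r = "gs_residual x k"
  have "l2_norm (?e k) = 1"
    using False by (simp add: l2_norm_gram_schmidt)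
  have x_split: "x k = (\<lambda>z. ?r z + (\<Sum>j<k. l2_inner (x k) (?e j) * ?e j z))"
    by (simp add: gs_residual_def)
  have "l2_inner (x k) (?e k) = l2_inner ?r (?e k)"
    by (subst x_split, subst l2_inner_add_left)
      (simp_all add: L2_gs_residual L2_sum L2_cmult L2 inner_sum_left)
  also have "\<dots> = complex_of_real (l2_norm ?r)"
    using \<open>l2_norm (?e k) = 1\<close>
    by (subst (1) gs_residual_eq[OF False, abs_def]) (simp add: l2_inner_cmult_left l2_inner_self)
  finally have coeff: "l2_inner (x k) (?e k) = complex_of_real (l2_norm ?r)" .
  have "x k z - (\<Sum>j\<le>k. l2_inner (x k) (?e j) * ?e j z) = 0" for z
    by (subst x_split) (simp add: lessThan_Suc_atMost[symmetric] coeff gs_residual_eq[OF False])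
  then show ?thesis
    by (simp add: l2_norm_def)
qed

lemma l2_inner_gram_schmidt_expansion:
  assumes "L2 g"
  shows "l2_inner (x m) g
    = (\<Sum>k<Suc m. l2_inner (x m) (gram_schmidt x k) * cnj (l2_inner g (gram_schmidt x k)))"
proof -
  let ?p = "\<lambda>z. \<Sum>j\<le>m. l2_inner (x m) (gram_schmidt x j) * gram_schmidt x j z"
  have "L2 ?p"
    by (intro L2_sum L2_cmult L2_gram_schmidt)
  have "cmod (l2_inner (\<lambda>z. x m z - ?p z) g) \<le> 0"
    using l2_inner_norm_le[OF L2_diff[OF L2_x[of m] \<open>L2 ?p\<close>] assms] l2_norm_gram_schmidt_expansion[of m]
    by simp
  then have "l2_inner (x m) g = l2_inner ?p g"
    by (simp add: l2_inner_diff_left[OF L2_x[of m] \<open>L2 ?p\<close> assms])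
  also have "\<dots> = (\<Sum>k<Suc m. l2_inner (x m) (gram_schmidt x k) * cnj (l2_inner g (gram_schmidt x k)))"
    using assms by (subst l2_inner_sum_left)
      (auto intro: L2_cmult L2_gram_schmidt simp: l2_inner_cmult_left cnj_l2_inner lessThan_Suc_atMost)
  finally show ?thesis .
qed

end

lemma norm_sum_mult_cnj_le:
  fixes u v :: "nat \<Rightarrow> complex"
  shows "cmod (\<Sum>k\<in>A. u k * cnj (v k)) \<le> sqrt (\<Sum>k\<in>A. (cmod (u k))\<^sup>2) * sqrt (\<Sum>k\<in>A. (cmod (v k))\<^sup>2)"
proof -
  have "cmod (\<Sum>k\<in>A. u k * cnj (v k)) \<le> (\<Sum>k\<in>A. cmod (u k) * cmod (v k))"
    using norm_sum[of "\<lambda>k. u k * cnj (v k)" A] by (simp add: norm_mult)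
  also have "\<dots> = sqrt ((\<Sum>k\<in>A. cmod (u k) * cmod (v k))\<^sup>2)"
    by (simp add: sum_nonneg)
  also have "\<dots> \<le> sqrt ((\<Sum>k\<in>A. (cmod (u k))\<^sup>2) * (\<Sum>k\<in>A. (cmod (v k))\<^sup>2))"
    by (intro real_sqrt_le_mono Cauchy_Schwarz_ineq_sum)
  finally show ?thesis
    by (simp add: real_sqrt_mult)
qed

lemma square_summable_tail_small:
  fixes b :: "nat \<Rightarrow> complex"
  assumes "\<And>K. (\<Sum>k<K. (cmod (b k))\<^sup>2) \<le> C" "\<epsilon> > 0"
  shows "\<exists>N. \<forall>m\<ge>N. \<forall>n. (\<Sum>k\<in>{m..<n}. (cmod (b k))\<^sup>2) < \<epsilon>"
proof -
  have "summable (\<lambda>k. (cmod (b k))\<^sup>2)"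
    by (rule summableI_nonneg_bounded) (use assms in auto)
  then show ?thesis
    using assms(2) by (auto simp: summable_Cauchy sum_nonneg)
qed

lemma square_sum_bound_limit:
  fixes a :: "nat \<Rightarrow> nat \<Rightarrow> complex"
  assumes "\<And>n K. (\<Sum>k<K. (cmod (a n k))\<^sup>2) \<le> C" "\<And>k. (\<lambda>n. a n k) \<longlonglongrightarrow> b k"
  shows "(\<Sum>k<K. (cmod (b k))\<^sup>2) \<le> C"
  by (rule LIMSEQ_le_const2[where X="\<lambda>n. \<Sum>k<K. (cmod (a n k))\<^sup>2"])
    (auto intro!: tendsto_intros assms)

lemma norm_sum_mult_cnj_interval_le:
  fixes c g :: "nat \<Rightarrow> complex"
  assumes "\<And>K. (\<Sum>k<K. (cmod (c k))\<^sup>2) \<le> 1"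
  shows "cmod (\<Sum>k\<in>{m..<n}. c k * cnj (g k)) \<le> sqrt (\<Sum>k\<in>{m..<n}. (cmod (g k))\<^sup>2)"
proof -
  have "(\<Sum>k\<in>{m..<n}. (cmod (c k))\<^sup>2) \<le> (\<Sum>k<n. (cmod (c k))\<^sup>2)"
    by (intro sum_mono2) auto
  then have "sqrt (\<Sum>k\<in>{m..<n}. (cmod (c k))\<^sup>2) \<le> 1"
    using assms[of n] by simp
  have "cmod (\<Sum>k\<in>{m..<n}. c k * cnj (g k))
      \<le> sqrt (\<Sum>k\<in>{m..<n}. (cmod (c k))\<^sup>2) * sqrt (\<Sum>k\<in>{m..<n}. (cmod (g k))\<^sup>2)"
    by (rule norm_sum_mult_cnj_le)
  also have "\<dots> \<le> 1 * sqrt (\<Sum>k\<in>{m..<n}. (cmod (g k))\<^sup>2)"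
    using \<open>sqrt (\<Sum>k\<in>{m..<n}. (cmod (c k))\<^sup>2) \<le> 1\<close> by (intro mult_right_mono) (simp_all add: sum_nonneg)
  finally show ?thesis
    by simp
qed

lemma sum_lessThan_split:
  fixes f :: "nat \<Rightarrow> 'a::comm_monoid_add"
  shows "m \<le> n \<Longrightarrow> (\<Sum>k<n. f k) = (\<Sum>k<m. f k) + (\<Sum>k\<in>{m..<n}. f k)"
  by (simp add: atLeast0LessThan[symmetric] sum.atLeastLessThan_concat)

lemma tendsto_pairing_if_coordinatewise:
  fixes a :: "nat \<Rightarrow> nat \<Rightarrow> complex" and b g :: "nat \<Rightarrow> complex" and N :: "nat \<Rightarrow> nat"
  assumes a_bound: "\<And>n K. (\<Sum>k<K. (cmod (a n k))\<^sup>2) \<le> 1"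
    and g_bound: "\<And>K. (\<Sum>k<K. (cmod (g k))\<^sup>2) \<le> C"
    and coord: "\<And>k. (\<lambda>n. a n k) \<longlonglongrightarrow> b k"
    and N: "filterlim N at_top sequentially"
    and T: "(\<lambda>K. \<Sum>k<K. b k * cnj (g k)) \<longlonglongrightarrow> T"
  shows "(\<lambda>n. \<Sum>k<N n. a n k * cnj (g k)) \<longlonglongrightarrow> T"
proof (rule tendstoI)
  fix \<epsilon> :: real
  assume "\<epsilon> > 0"
  have b_bound: "(\<Sum>k<K. (cmod (b k))\<^sup>2) \<le> 1" for K
    using a_bound coord by (rule square_sum_bound_limit)
  obtain K0 where K0: "\<And>n. (\<Sum>k\<in>{K0..<n}. (cmod (g k))\<^sup>2) < (\<epsilon>/3)\<^sup>2"
    using square_summable_tail_small[OF g_bound, of "(\<epsilon>/3)\<^sup>2"] \<open>\<epsilon> > 0\<close> by auto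
  have tail: "cmod (\<Sum>k\<in>{K0..<n}. c k * cnj (g k)) < \<epsilon>/3"
    if "\<And>K. (\<Sum>k<K. (cmod (c k))\<^sup>2) \<le> 1" for c n
    using norm_sum_mult_cnj_interval_le[OF that, of g K0 n] real_sqrt_less_mono[OF K0[of n]] \<open>\<epsilon> > 0\<close>
    by simp
  define P where "P = (\<Sum>k<K0. b k * cnj (g k))"
  have T_P: "cmod (T - P) \<le> \<epsilon>/3"
  proof (rule LIMSEQ_le_const2)
    show "(\<lambda>K. cmod ((\<Sum>k<K. b k * cnj (g k)) - P)) \<longlonglongrightarrow> cmod (T - P)"
      by (intro tendsto_intros T)
    show "\<exists>M. \<forall>K\<ge>M. cmod ((\<Sum>k<K. b k * cnj (g k)) - P) \<le> \<epsilon>/3"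
    proof (intro exI allI impI)
      fix K
      assume "K0 \<le> K"
      then have "(\<Sum>k<K. b k * cnj (g k)) - P = (\<Sum>k\<in>{K0..<K}. b k * cnj (g k))"
        by (simp add: P_def sum_lessThan_split[of K0 K])
      then show "cmod ((\<Sum>k<K. b k * cnj (g k)) - P) \<le> \<epsilon>/3"
        using tail[OF b_bound, of K] by simp
    qed
  qed
  have "eventually (\<lambda>n. cmod ((\<Sum>k<K0. a n k * cnj (g k)) - P) < \<epsilon>/3) sequentially"
    using \<open>\<epsilon> > 0\<close> unfolding P_def
    by (intro order_tendstoD(2)[OF tendsto_norm[OF LIM_zero]] tendsto_intros coord) simp
  moreover have "eventually (\<lambda>n. K0 \<le> N n) sequentially"
    using N by (simp add: filterlim_at_top)
  ultimately show "eventually (\<lambda>n. dist (\<Sum>k<N n. a n k * cnj (g k)) T < \<epsilon>) sequentially"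
  proof eventually_elim
    case (elim n)
    then have "(\<Sum>k<N n. a n k * cnj (g k)) - T
        = ((\<Sum>k<K0. a n k * cnj (g k)) - P) + (\<Sum>k\<in>{K0..<N n}. a n k * cnj (g k)) + (P - T)"
      by (simp add: sum_lessThan_split[of K0 "N n"])
    then have "dist (\<Sum>k<N n. a n k * cnj (g k)) T
        \<le> cmod ((\<Sum>k<K0. a n k * cnj (g k)) - P) + cmod (\<Sum>k\<in>{K0..<N n}. a n k * cnj (g k)) + cmod (P - T)"
      unfolding dist_norm by (simp only: norm_triangle_le add_right_mono norm_triangle_ineq)
    then show "dist (\<Sum>k<N n. a n k * cnj (g k)) T < \<epsilon>"
      using elim(1) tail[OF a_bound, of n "N n"] T_P
      by (simp add: norm_minus_commute[of P T])
  qed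
qed

lemma diagonal_subseq_convergent:
  fixes c :: "nat \<Rightarrow> nat \<Rightarrow> 'a::heine_borel"
  assumes "\<And>k. bounded (range (\<lambda>n. c n k))"
  shows "\<exists>r. strict_mono r \<and> (\<forall>k. convergent (\<lambda>n. c (r n) k))"
proof -
  interpret subseqs "\<lambda>k s. convergent (\<lambda>n. c (s n) k)"
  proof
    fix k and s :: "nat \<Rightarrow> nat"
    have "bounded (range (\<lambda>n. c (s n) k))"
      using assms[of k] by (rule bounded_subset) auto
    then obtain l r where "strict_mono r" "((\<lambda>n. c (s n) k) \<circ> r) \<longlonglongrightarrow> l"
      using bounded_imp_convergent_subsequence by blast
    then show "\<exists>r. strict_mono r \<and> convergent (\<lambda>n. c ((s \<circ> r) n) k)"
      by (auto simp: convergent_def o_def)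
  qed
  have "convergent (\<lambda>n. c (diagseq n) k)" for k
  proof -
    have "convergent (\<lambda>n. c ((diagseq \<circ> (+) (Suc k)) n) k)"
    proof (rule diagseq_holds)
      fix r s :: "nat \<Rightarrow> nat" and k
      assume "strict_mono r" "convergent (\<lambda>n. c (s n) k)"
      then show "convergent (\<lambda>n. c ((s \<circ> r) n) k)"
        using LIMSEQ_subseq_LIMSEQ[of "\<lambda>n. c (s n) k" _ r] by (auto simp: convergent_def o_def)
    qed
    then have "convergent (\<lambda>n. c (diagseq (n + Suc k)) k)"
      by (simp add: o_def add.commute)
    then show ?thesis
      by (rule convergent_ignore_initial_segment[THEN iffD1])
  qed
  with subseq_diagseq show ?thesis
    by blast
qed

lemma tendsto_l2_inner_if_l2_norm_tendsto:
  assumes "\<And>n. L2 (f n)" "L2 y" "L2 g" "(\<lambda>n. l2_norm (\<lambda>x. f n x - y x)) \<longlonglongrightarrow> 0"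
  shows "(\<lambda>n. l2_inner (f n) g) \<longlonglongrightarrow> l2_inner y g"
proof -
  have "(\<lambda>n. l2_inner (f n) g - l2_inner y g) \<longlonglongrightarrow> 0"
  proof (rule Lim_null_comparison)
    show "eventually (\<lambda>n. norm (l2_inner (f n) g - l2_inner y g) \<le> l2_norm (\<lambda>x. f n x - y x) * l2_norm g) sequentially"
      using assms(1-3) by (intro always_eventually allI)
        (simp add: l2_inner_diff_left[symmetric] l2_inner_norm_le L2_diff)
    show "(\<lambda>n. l2_norm (\<lambda>x. f n x - y x) * l2_norm g) \<longlonglongrightarrow> 0"
      by (rule tendsto_mult_left_zero[OF assms(4)])
  qed
  then show ?thesis
    by (simp add: LIM_zero_iff)
qed

lemma (in l2_orthonormal_or_zero) square_summable_series_convergent: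
  assumes b: "\<And>K. (\<Sum>k<K. (cmod (b k))\<^sup>2) \<le> 1"
  shows "\<exists>y. L2 y \<and> l2_norm y \<le> 1 \<and>
           (\<forall>g. L2 g \<longrightarrow> (\<lambda>K. \<Sum>k<K. b k * cnj (l2_inner g (e k))) \<longlonglongrightarrow> l2_inner y g)"
proof -
  define S where "S K = (\<lambda>z. \<Sum>k<K. b k * e k z)" for K
  have L2_S: "L2 (S K)" for K
    unfolding S_def by (intro L2_sum L2_cmult L2)
  have S_diff: "(l2_norm (\<lambda>z. S n z - S m z))\<^sup>2 \<le> (\<Sum>k\<in>{m..<n}. (cmod (b k))\<^sup>2)" if "m \<le> n" for m n
    using norm_sum_le[of "{m..<n}" b] that by (simp add: S_def sum_lessThan_split[of m n])
  have "\<exists>y. L2 y \<and> (\<lambda>K. l2_norm (\<lambda>z. S K z - y z)) \<longlonglongrightarrow> 0"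
  proof (rule L2_Cauchy_convergent[OF L2_S])
    fix \<epsilon> :: real
    assume "\<epsilon> > 0"
    then obtain N where N: "\<forall>m\<ge>N. \<forall>n. (\<Sum>k\<in>{m..<n}. (cmod (b k))\<^sup>2) < \<epsilon>\<^sup>2"
      using square_summable_tail_small[OF b, of "\<epsilon>\<^sup>2"] by auto
    have "l2_norm (\<lambda>z. S n z - S m z) < \<epsilon>" if "N \<le> m" "m \<le> n" for m n
    proof (rule power2_less_imp_less)
      show "(l2_norm (\<lambda>z. S n z - S m z))\<^sup>2 < \<epsilon>\<^sup>2"
        using order.strict_trans1[OF S_diff[OF that(2)]] N that(1) by blast
    qed (use \<open>\<epsilon> > 0\<close> in simp)
    then show "\<exists>N. \<forall>i\<ge>N. \<forall>j\<ge>N. l2_norm (\<lambda>z. S i z - S j z) < \<epsilon>"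
      by (metis l2_norm_minus_commute nat_le_linear)
  qed
  then obtain y where "L2 y" and S_y: "(\<lambda>K. l2_norm (\<lambda>z. S K z - y z)) \<longlonglongrightarrow> 0"
    by blast
  have "l2_norm y \<le> 1 + l2_norm (\<lambda>z. S K z - y z)" for K
  proof -
    have "l2_norm y \<le> l2_norm (S K) + l2_norm (\<lambda>z. y z - S K z)"
      using l2_norm_triangle[OF L2_S L2_diff[OF \<open>L2 y\<close> L2_S], of K K] by simp
    moreover have "(l2_norm (S K))\<^sup>2 \<le> 1"
      using norm_sum_le[of "{..<K}" b] b[of K] by (simp add: S_def)
    ultimately show ?thesis
      by (simp add: l2_norm_minus_commute abs_square_le_1 l2_norm_nonneg)
  qed
  then have "l2_norm y \<le> 1"
    using tendsto_add[OF tendsto_const[of 1] S_y] by (intro LIMSEQ_le_const) auto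
  moreover have "(\<lambda>K. \<Sum>k<K. b k * cnj (l2_inner g (e k))) \<longlonglongrightarrow> l2_inner y g" if "L2 g" for g
  proof -
    have "l2_inner (S K) g = (\<Sum>k<K. b k * cnj (l2_inner g (e k)))" for K
      unfolding S_def using that
      by (subst l2_inner_sum_left) (auto intro: L2_cmult L2 simp: l2_inner_cmult_left cnj_l2_inner)
    then show ?thesis
      using tendsto_l2_inner_if_l2_norm_tendsto[OF L2_S \<open>L2 y\<close> that S_y] by simp
  qed
  ultimately show ?thesis
    using \<open>L2 y\<close> by blast
qed

theorem L2_unit_ball_weakly_sequentially_compact:
  fixes x :: "nat \<Rightarrow> real^'n::finite \<Rightarrow> complex"
  assumes L2_x: "\<And>m. L2 (x m)" and norm_x: "\<And>m. l2_norm (x m) \<le> 1"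
  shows "\<exists>r y. strict_mono r \<and> L2 y \<and> l2_norm y \<le> 1 \<and>
           (\<forall>g. L2 g \<longrightarrow> (\<lambda>n. l2_inner (x (r n)) g) \<longlonglongrightarrow> l2_inner y g)"
proof -
  let ?e = "gram_schmidt x"
  interpret l2_orthonormal_or_zero ?e
    using L2_x by (rule gram_schmidt_orthonormal_or_zero)
  define c where "c m k = l2_inner (x m) (?e k)" for m k
  have c_bound: "(\<Sum>k<K. (cmod (c m k))\<^sup>2) \<le> 1" for m K
  proof -
    have "(l2_norm (x m))\<^sup>2 \<le> 1"
      using norm_x[of m] l2_norm_nonneg[of "x m"] by (simp add: power_le_one)
    with bessel_inequality[OF _ L2_x, of "{..<K}" m] show ?thesis
      by (simp add: c_def)
  qed
  have "bounded (range (\<lambda>m. c m k))" for k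
  proof -
    have "(cmod (c m k))\<^sup>2 \<le> (\<Sum>j<Suc k. (cmod (c m j))\<^sup>2)" for m
      by (rule member_le_sum) auto
    then have "(cmod (c m k))\<^sup>2 \<le> 1" for m
      using c_bound order_trans by blast
    then show ?thesis
      by (auto simp: bounded_iff abs_square_le_1)
  qed
  then obtain r where r: "strict_mono r" and "\<And>k. convergent (\<lambda>n. c (r n) k)"
    using diagonal_subseq_convergent by blast
  then have c_lim: "(\<lambda>n. c (r n) k) \<longlonglongrightarrow> lim (\<lambda>n. c (r n) k)" for k
    by (simp add: convergent_LIMSEQ_iff)
  have b_bound: "(\<Sum>k<K. (cmod (lim (\<lambda>n. c (r n) k)))\<^sup>2) \<le> 1" for K
    using c_bound c_lim by (rule square_sum_bound_limit)
  then obtain y where "L2 y" "l2_norm y \<le> 1" and y: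
    "\<And>g. L2 g \<Longrightarrow> (\<lambda>K. \<Sum>k<K. lim (\<lambda>n. c (r n) k) * cnj (l2_inner g (?e k))) \<longlonglongrightarrow> l2_inner y g"
    using square_summable_series_convergent[OF b_bound] by blast
  have "(\<lambda>n. l2_inner (x (r n)) g) \<longlonglongrightarrow> l2_inner y g" if "L2 g" for g
  proof -
    have "l2_inner (x m) g = (\<Sum>k<Suc m. c m k * cnj (l2_inner g (?e k)))" for m
      unfolding c_def using L2_x that by (rule l2_inner_gram_schmidt_expansion)
    moreover have "(\<lambda>n. \<Sum>k<Suc (r n). c (r n) k * cnj (l2_inner g (?e k))) \<longlonglongrightarrow> l2_inner y g"
    proof (rule tendsto_pairing_if_coordinatewise)
      show "(\<Sum>k<K. (cmod (l2_inner g (?e k)))\<^sup>2) \<le> (l2_norm g)\<^sup>2" for K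
        by (rule bessel_inequality[OF _ that]) simp
      show "filterlim (\<lambda>n. Suc (r n)) at_top sequentially"
        by (rule filterlim_compose[OF filterlim_Suc filterlim_subseq[OF r]])
    qed (use c_bound c_lim y[OF that] in auto)
    ultimately show ?thesis
      by simp
  qed
  with r \<open>L2 y\<close> \<open>l2_norm y \<le> 1\<close> show ?thesis
    by blast
qed

lemma P_disc_tendsto_if_weakly_convergent:
  assumes L2_\<phi>: "\<And>j. j \<le> M \<Longrightarrow> L2 (\<phi> j)"
    and weak: "\<And>g. L2 g \<Longrightarrow> (\<lambda>n. l2_inner (f n) g) \<longlonglongrightarrow> l2_inner y g"
  shows "(\<lambda>n. l2_norm (\<lambda>x. P_disc M \<phi> (f n) x - P_disc M \<phi> y x)) \<longlonglongrightarrow> 0"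
proof (rule Lim_null_comparison)
  define d where "d n j = l2_inner (f n) (\<phi> j) - l2_inner y (\<phi> j)" for n j
  have "l2_norm (\<lambda>x. P_disc M \<phi> (f n) x - P_disc M \<phi> y x) \<le> (\<Sum>j\<le>M. cmod (d n j) * l2_norm (\<phi> j))" for n
  proof -
    have "l2_norm (\<lambda>x. P_disc M \<phi> (f n) x - P_disc M \<phi> y x) = l2_norm (\<lambda>x. \<Sum>j\<le>M. d n j * \<phi> j x)"
      by (simp add: P_disc_def d_def sum_subtractf left_diff_distrib)
    also have "\<dots> \<le> (\<Sum>j\<le>M. l2_norm (\<lambda>x. d n j * \<phi> j x))"
      by (rule l2_norm_sum_le) (simp add: L2_cmult L2_\<phi>)
    finally show ?thesis
      by (simp add: l2_norm_cmult)
  qed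
  then show "eventually (\<lambda>n. norm (l2_norm (\<lambda>x. P_disc M \<phi> (f n) x - P_disc M \<phi> y x))
      \<le> (\<Sum>j\<le>M. cmod (d n j) * l2_norm (\<phi> j))) sequentially"
    by (simp add: l2_norm_nonneg)
  have "(\<lambda>n. d n j) \<longlonglongrightarrow> 0" if "j \<le> M" for j
    unfolding d_def using weak[OF L2_\<phi>[OF that]] by (simp add: LIM_zero)
  then show "(\<lambda>n. \<Sum>j\<le>M. cmod (d n j) * l2_norm (\<phi> j)) \<longlonglongrightarrow> 0"
    by (auto intro!: tendsto_null_sum tendsto_mult_left_zero tendsto_norm_zero)
qed

theorem lemma3p3:
  fixes V :: "real^'n::finite \<Rightarrow> real"
    and U :: "real \<Rightarrow> (real^'n \<Rightarrow> complex) \<Rightarrow> (real^'n \<Rightarrow> complex)"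
    and \<mu> :: "real^'n \<Rightarrow> real"
    and M :: nat and \<phi> :: "nat \<Rightarrow> real^'n \<Rightarrow> complex" and lam :: "nat \<Rightarrow> real"
    and \<alpha> :: "nat \<Rightarrow> complex" and \<epsilon> c :: real
    and \<Psi> :: "real \<Rightarrow> real^'n \<Rightarrow> complex"
  assumes dim: "CARD('n) \<ge> 2"
    and V_decay: "decay_A V"
    and V_regular: "zero_regular V"
    and U_prop: "is_propagator V U"
    and mu_meas: "\<mu> \<in> borel_measurable lborel"
    and mu_Lp: "\<exists>p. 2 \<le> p \<and> p < 2 * real CARD('n) \<and> Lp_fun p \<mu>"
    and mu_Linf: "Linf_fun \<mu>"
    and eig: "\<And>j. j \<le> M \<Longrightarrow> is_eigenfunction U (lam j) (\<phi> j)"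
    and orth: "\<And>j k. j \<le> M \<Longrightarrow> k \<le> M \<Longrightarrow> l2_inner (\<phi> j) (\<phi> k) = (if j = k then 1 else 0)"
    and span: "\<And>l \<psi>. is_eigenfunction U l \<psi> \<Longrightarrow>
                 \<exists>a::nat \<Rightarrow> complex. l2_norm (\<lambda>x. \<psi> x - (\<Sum>j\<le>M. a j * \<phi> j x)) = 0"
    and Psi0_norm: "l2_norm (\<lambda>x. \<Sum>j\<le>M. \<alpha> j * \<phi> j x) = 1"
    and alpha0: "\<alpha> 0 \<noteq> 0"
    and lam_distinct: "\<And>j k. j \<le> M \<Longrightarrow> k \<le> M \<Longrightarrow> j \<noteq> k \<Longrightarrow> lam j \<noteq> lam k"
    and lam_nondeg: "\<And>j1 k1 j2 k2. j1 \<le> M \<Longrightarrow> k1 \<le> M \<Longrightarrow> j2 \<le> M \<Longrightarrow> k2 \<le> M \<Longrightarrow>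
                 j1 \<noteq> k1 \<Longrightarrow> j2 \<noteq> k2 \<Longrightarrow> (j1, k1) \<noteq> (j2, k2) \<Longrightarrow>
                 lam j1 - lam k1 \<noteq> lam j2 - lam k2"
    and coupling: "\<And>j k. j \<le> M \<Longrightarrow> k \<le> M \<Longrightarrow> j \<noteq> k \<Longrightarrow>
                 l2_inner (\<lambda>x. complex_of_real (\<mu> x) * \<phi> j x) (\<phi> k) \<noteq> 0"
    and eps_pos: "\<epsilon> > 0" and c_pos: "c > 0"
    and sol: "weak_solution U (u_ctrl c \<epsilon> M \<phi> \<mu>) \<mu> (\<lambda>x. \<Sum>j\<le>M. \<alpha> j * \<phi> j x) \<Psi>"
  shows "\<exists>tn :: nat \<Rightarrow> real. \<exists>\<Psi>inf :: real^'n \<Rightarrow> complex.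
           (\<forall>n. 0 \<le> tn n) \<and> incseq tn \<and> filterlim tn at_top sequentially \<and>
           L2 \<Psi>inf \<and> l2_norm \<Psi>inf \<le> 1 \<and>
           (\<forall>g. L2 g \<longrightarrow> (\<lambda>n. l2_inner (\<Psi> (tn n)) g) \<longlonglongrightarrow> l2_inner \<Psi>inf g) \<and>
           (\<lambda>n. l2_norm (\<lambda>x. P_disc M \<phi> (\<Psi> (tn n)) x - P_disc M \<phi> \<Psi>inf x)) \<longlonglongrightarrow> 0"
proof -
  have "L2 (\<Psi> (real m)) \<and> l2_norm (\<Psi> (real m)) = 1" for m
    using sol by (simp add: weak_solution_def)
  then obtain r \<Psi>inf where r: "strict_mono r" and "L2 \<Psi>inf" "l2_norm \<Psi>inf \<le> 1"
    and weak: "\<And>g. L2 g \<Longrightarrow> (\<lambda>n. l2_inner (\<Psi> (real (r n))) g) \<longlonglongrightarrow> l2_inner \<Psi>inf g"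
    using L2_unit_ball_weakly_sequentially_compact[of "\<lambda>m. \<Psi> (real m)"] by fastforce
  have "(\<lambda>n. l2_norm (\<lambda>x. P_disc M \<phi> (\<Psi> (real (r n))) x - P_disc M \<phi> \<Psi>inf x)) \<longlonglongrightarrow> 0"
    using eig weak by (intro P_disc_tendsto_if_weakly_convergent) (auto simp: is_eigenfunction_def)
  moreover have "incseq (\<lambda>n. real (r n))"
    using strict_mono_mono[OF r] by (simp add: incseq_def mono_def)
  moreover have "filterlim (\<lambda>n. real (r n)) at_top sequentially"
    by (rule filterlim_compose[OF filterlim_real_sequentially filterlim_subseq[OF r]])
  ultimately show ?thesis
    using \<open>L2 \<Psi>inf\<close> \<open>l2_norm \<Psi>inf \<le> 1\<close> weak by (intro exI[of _ "\<lambda>n. real (r n)"] exI[of _ \<Psi>inf]) auto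
qed

end
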